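(* Consider the discrete-time $Geo^X/G_r^{(a,b)}/1$ queue with single ($\delta=0$) or multiple ($\delta=1$) vacations described in the context, with $\rho<1$, and let $p^+_{n,r}$, $p^+_n$, $Q^+_n$ be its departure/vacation-termination-epoch probabilities. Let $P^+(x,y)=\sum_{n\ge0}\sum_{r=a}^bp^+_{n,r}x^ny^r$. Then for all complex $x,y$ with $|x|\le1$, $|y|\le1$ and $x^b\neq K^{(b)}(x)$, $$P^+(x,y)=\frac{N(x,y)}{x^b-K^{(b)}(x)},$$ where $$\begin{aligned}N(x,y)=&\sum_{n=0}^{a-1}p^+_nx^n\{H(x)-1\}y^bK^{(b)}(x)+\sum_{n=0}^{a-1}Q^+_n\Big[x^n\{\delta H(x)-1\}y^bK^{(b)}(x)\\&+(1-\delta)\sum_{j=n}^{a-1}e_{j,n}\Big(\sum_{i=a}^bg_{i-j}K^{(i)}(x)\big\{(x^b-K^{(b)}(x))y^i+y^bK^{(b)}(x)\big\}+\sum_{i=b+1-j}^\infty g_ix^{i+j}y^bK^{(b)}(x)\Big)\Big]\\&+\sum_{n=a}^{b-1}(p^+_n+Q^+_n)\Big[K^{(b)}(x)K^{(n)}(x)(y^b-y^n)+K^{(n)}(x)x^by^n-K^{(b)}(x)x^ny^b\Big].\end{aligned}$$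
   Context: Time is slotted. Fix integers $1\le a\le b$, $\lambda\in(0,1)$, $\bar\lambda=1-\lambda$, and a group-size distribution $(g_m)_{m\ge1}$ with finite mean $\bar g$ and pgf $G(z)=\sum_{m\ge1}g_mz^m$; $g_m=0$ for $m\le0$. In each slot a group arrives with probability $\lambda$, with size distribution $(g_m)$. Service follows the $(a,b)$ bulk rule (start only if at least $a$ wait; take all if $a\le r\le b$ wait, exactly $b$ if more than $b$ wait). A batch of size $r$ ($a\le r\le b$) has service-time pmf $s_r(n)$, $n\ge1$, pgf $S_r^*(z)$, mean $s_r$, $\mu_b=1/s_b$. Vacation times have pmf $v_n$, $n\ge1$, pgf $V^*(z)$, finite mean. $\delta=0$: single vacation (server stays dormant after a vacation until $a$ wait); $\delta=1$: multiple vacations. $\rho=\lambda\bar g/(b\mu_b)<1$. Stationary probabilities $p_{n,0}$ ($0\le n\le a-1$, dormant), $p_{n,r}(u)$ ($n\ge0$ waiting, batch size $a\le r\le b$ in service, remaining service $u\ge1$), $Q_n(u)$ ($n\ge0$ waiting, on vacation, remaining vacation $u\ge1$) satisfy: (E1) $p_{0,0}=(1-\delta)[\bar\lambda p_{0,0}+\bar\lambda Q_0(1)]$; (E2) $p_{n,0}=(1-\delta)[\bar\lambda p_{n,0}+\lambda\sum_{i=1}^ng_ip_{n-i,0}+\bar\lambda Q_n(1)+\lambda\sum_{i=1}^ng_iQ_{n-i}(1)]$, $1\le n\le a-1$; (E3) $p_{0,r}(u)=\bar\lambda p_{0,r}(u+1)+s_r(u)\big[\sum_{m=a}^b(\bar\lambda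 p_{r,m}(1)+\lambda\sum_{i=1}^rg_ip_{r-i,m}(1))+\bar\lambda Q_r(1)+\lambda\sum_{i=1}^rg_iQ_{r-i}(1)+(1-\delta)\lambda\sum_{i=0}^{a-1}g_{r-i}p_{i,0}\big]$, $a\le r\le b$; (E4) $p_{n,r}(u)=\bar\lambda p_{n,r}(u+1)+\lambda\sum_{i=1}^ng_ip_{n-i,r}(u+1)$, $n\ge1$, $a\le r\le b-1$; (E5) $p_{n,b}(u)=\bar\lambda p_{n,b}(u+1)+\lambda\sum_{i=1}^ng_ip_{n-i,b}(u+1)+s_b(u)\big[\sum_{m=a}^b(\bar\lambda p_{n+b,m}(1)+\lambda\sum_{i=1}^{n+b}g_ip_{n+b-i,m}(1))+\bar\lambda Q_{n+b}(1)+\lambda\sum_{i=1}^{n+b}g_iQ_{n+b-i}(1)+(1-\delta)\lambda\sum_{i=0}^{a-1}g_{n+b-i}p_{i,0}\big]$, $n\ge1$; (E6) $Q_0(u)=\bar\lambda Q_0(u+1)+\bar\lambda(\sum_{m=a}^bp_{0,m}(1)+\delta Q_0(1))v_u$; (E7) $Q_n(u)=\bar\lambda Q_n(u+1)+\lambda\sum_{i=1}^ng_iQ_{n-i}(u+1)+v_u\big[\bar\lambda(\sum_{m=a}^bp_{n,m}(1)+\delta Q_n(1))+\lambda\sum_{i=1}^ng_i(\sum_{m=a}^bp_{n-i,m}(1)+\delta Q_{n-i}(1))\big]$, $1\le n\le a-1$; (E8) $Q_n(u)=\bar\lambda Q_n(u+1)+\lambda\sum_{i=1}^ng_iQ_{n-i}(u+1)$,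 $n\ge a$; (N) $(1-\delta)\sum_{n=0}^{a-1}p_{n,0}+\sum_{n,r,u}p_{n,r}(u)+\sum_{n,u}Q_n(u)=1$. With $\tau=\sum_{m\ge0}\sum_{r=a}^bp_{m,r}(1)+\sum_{m\ge0}Q_m(1)$: $p^+_{0,r}=\tau^{-1}\bar\lambda p_{0,r}(1)$, $p^+_{n,r}=\tau^{-1}(\bar\lambda p_{n,r}(1)+\lambda\sum_{i=1}^ng_ip_{n-i,r}(1))$ ($n\ge1$); $p^+_n=\sum_{r=a}^bp^+_{n,r}$; $Q^+_0=\tau^{-1}\bar\lambda Q_0(1)$, $Q^+_n=\tau^{-1}(\bar\lambda Q_n(1)+\lambda\sum_{i=1}^ng_iQ_{n-i}(1))$ ($n\ge1$). $K^{(r)}(x)=S_r^*(\bar\lambda+\lambda G(x))$ (pgf of the number of arriving customers during a service of a batch of size $r$), $H(x)=V^*(\bar\lambda+\lambda G(x))$ (pgf of the number of arrivals during a vacation). $e_{n,i}$ ($0\le i\le n$): $e_{n,n}=1$, $e_{n,n-1}=g_1$, $e_{n,i}=\sum_{j=i+1}^{n-1}e_{n,j}g_{j-i}+g_{n-i}$ for $0\le i\le n-2$. *)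

theory Defs
  imports "HOL-Analysis.Analysis"
begin

definition pgf :: "(nat \<Rightarrow> real) \<Rightarrow> complex \<Rightarrow> complex" where
  "pgf f z = (\<Sum>n. complex_of_real (f n) * z ^ n)"

text \<open>K^(r)(x) = S_r^*(lbar + lam G(x)); s r is the service-time pmf for batch size r.\<close>
definition Kf :: "real \<Rightarrow> (nat \<Rightarrow> real) \<Rightarrow> (nat \<Rightarrow> nat \<Rightarrow> real) \<Rightarrow> nat \<Rightarrow> complex \<Rightarrow> complex" where
  "Kf lam g s r x = pgf (s r) (complex_of_real (1 - lam) + complex_of_real lam * pgf g x)"

definition Hf :: "real \<Rightarrow> (nat \<Rightarrow> real) \<Rightarrow> (nat \<Rightarrow> real) \<Rightarrow> complex \<Rightarrow> complex" where
  "Hf lam g v x = pgf v (complex_of_real (1 - lam) + complex_of_real lam * pgf g x)"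

function ecoef :: "(nat \<Rightarrow> real) \<Rightarrow> nat \<Rightarrow> nat \<Rightarrow> real" where
  "ecoef g n i =
     (if i = n then 1
      else if i + 1 = n then g 1
      else if i < n then (\<Sum>j\<in>{i+1..n-1}. ecoef g n j * g (j - i)) + g (n - i)
      else 0)"
  by auto
termination by (relation "Wellfounded.measure (\<lambda>(g,n,i). n - i)") auto

definition tau :: "nat \<Rightarrow> nat \<Rightarrow> (nat \<Rightarrow> nat \<Rightarrow> nat \<Rightarrow> real) \<Rightarrow> (nat \<Rightarrow> nat \<Rightarrow> real) \<Rightarrow> real" where
  "tau a b p Q = (\<Sum>m. \<Sum>r=a..b. p m r 1) + (\<Sum>m. Q m 1)"

definition pplus :: "real \<Rightarrow> (nat \<Rightarrow> real) \<Rightarrow> nat \<Rightarrow> nat \<Rightarrow> (nat \<Rightarrow> nat \<Rightarrow> nat \<Rightarrow> real) \<Rightarrow> (nat \<Rightarrow> nat \<Rightarrow> real) \<Rightarrow> nat \<Rightarrow> nat \<Rightarrow> real" where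
  "pplus lam g a b p Q n r =
     ((1 - lam) * p n r 1 + lam * (\<Sum>i=1..n. g i * p (n - i) r 1)) / tau a b p Q"

definition pplusn :: "real \<Rightarrow> (nat \<Rightarrow> real) \<Rightarrow> nat \<Rightarrow> nat \<Rightarrow> (nat \<Rightarrow> nat \<Rightarrow> nat \<Rightarrow> real) \<Rightarrow> (nat \<Rightarrow> nat \<Rightarrow> real) \<Rightarrow> nat \<Rightarrow> real" where
  "pplusn lam g a b p Q n = (\<Sum>r=a..b. pplus lam g a b p Q n r)"

definition Qplus :: "real \<Rightarrow> (nat \<Rightarrow> real) \<Rightarrow> nat \<Rightarrow> nat \<Rightarrow> (nat \<Rightarrow> nat \<Rightarrow> nat \<Rightarrow> real) \<Rightarrow> (nat \<Rightarrow> nat \<Rightarrow> real) \<Rightarrow> nat \<Rightarrow> real" where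
  "Qplus lam g a b p Q n =
     ((1 - lam) * Q n 1 + lam * (\<Sum>i=1..n. g i * Q (n - i) 1)) / tau a b p Q"

end

(*
  Write p n r u for the mass with n waiting, a batch of size r in service and u slots of that
  service left. Passing from remaining time u + 1 to u is one slot of group arrivals, which
  multiplies generating functions in x by A(x) = 1 - lam + lam G(x), and mass s_r(u) C_n enters
  at remaining time u, where C_n is the mass of starts of a batch of size r leaving n waiting.
  Unrolling this recurrence in u shows that the departure-epoch masses of batches of size r have
  generating function C(x) K^(r)(x); in the same way the vacation-end masses have generating
  function D(x) H(x), where D collects the states with fewer than a waiting.

  A batch of size r < b starts only with exactly r waiting, whereas a batch of size b starts
  from every state with at least b waiting, so its start generating function C_b is a tail of
  the generating function of all service starts. The latter is the sum of the departure,
  vacation-end and dormant-arrival generating functions, which gives a linear equation for C_b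
  with coefficient x^b - K^(b)(x). Finally, (E1) and (E2) say that the dormant masses solve a
  renewal equation driven by the vacation ends; its solution is expressed through the
  coefficients e_{n,i}, and substituting everything yields N(x,y).
*)
theory Submission
  imports Defs
begin

section \<open>Generating functions on the closed unit disc\<close>

lemma norm_pgf_term_le:
  assumes "cmod z \<le> 1"
  shows "norm (complex_of_real (f n) * z ^ n) \<le> \<bar>f n\<bar>"
  using assms by (simp add: norm_mult norm_power mult_left_le power_le_one)

lemma summable_norm_pgf_terms:
  assumes "summable (\<lambda>n. \<bar>f n\<bar>)" "cmod z \<le> 1"
  shows "summable (\<lambda>n. norm (complex_of_real (f n) * z ^ n))"
  by (rule summable_comparison_test'[OF assms(1), where N = 0]) (simp add: norm_pgf_term_le assms(2))

lemma pgf_sums: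
  assumes "summable (\<lambda>n. \<bar>f n\<bar>)" "cmod z \<le> 1"
  shows "(\<lambda>n. complex_of_real (f n) * z ^ n) sums pgf f z"
  unfolding pgf_def by (rule summable_sums, rule summable_norm_cancel, rule summable_norm_pgf_terms[OF assms])

lemma pgf_eqI: "(\<lambda>n. complex_of_real (f n) * z ^ n) sums S \<Longrightarrow> pgf f z = S"
  unfolding pgf_def by (rule sums_unique[symmetric])

lemma norm_pgf_le:
  assumes "\<And>n. 0 \<le> f n" "summable f" "cmod z \<le> 1"
  shows "cmod (pgf f z) \<le> suminf f"
proof -
  have abs: "summable (\<lambda>n. \<bar>f n\<bar>)" using assms by simp
  have "cmod (pgf f z) \<le> (\<Sum>n. norm (complex_of_real (f n) * z ^ n))"
    unfolding pgf_def by (rule summable_norm[OF summable_norm_pgf_terms[OF abs assms(3)]])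
  also have "\<dots> \<le> suminf f"
  proof (rule suminf_le[OF _ summable_norm_pgf_terms[OF abs assms(3)] assms(2)])
    show "norm (complex_of_real (f n) * z ^ n) \<le> f n" for n
      using norm_pgf_term_le[OF assms(3), of f n] assms(1)[of n] by simp
  qed
  finally show ?thesis .
qed

lemma pgf_finite_support:
  assumes "\<And>n. k \<le> n \<Longrightarrow> f n = 0"
  shows "pgf f z = (\<Sum>n<k. complex_of_real (f n) * z ^ n)"
  by (rule pgf_eqI, rule sums_finite) (auto simp: assms)

lemma pgf_shift:
  assumes "summable (\<lambda>n. \<bar>f n\<bar>)" "cmod z \<le> 1"
  shows "z ^ k * pgf (\<lambda>n. f (n + k)) z = pgf f z - (\<Sum>n<k. complex_of_real (f n) * z ^ n)"
proof -
  have "summable (\<lambda>n. \<bar>f (n + k)\<bar>)"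
    using assms(1) by (subst summable_iff_shift)
  from sums_mult[OF pgf_sums[OF this assms(2)], of "z ^ k"]
  have "(\<lambda>n. complex_of_real (f (n + k)) * z ^ (n + k)) sums (z ^ k * pgf (\<lambda>n. f (n + k)) z)"
    by (simp add: power_add mult_ac)
  moreover have "(\<lambda>n. complex_of_real (f (n + k)) * z ^ (n + k)) sums
      (pgf f z - (\<Sum>n<k. complex_of_real (f n) * z ^ n))"
    using sums_iff_shift'[THEN iffD2, OF pgf_sums[OF assms]] .
  ultimately show ?thesis by (rule sums_unique2)
qed

lemma pgf_add:
  assumes "summable (\<lambda>n. \<bar>f n\<bar>)" "summable (\<lambda>n. \<bar>h n\<bar>)" "cmod z \<le> 1"
  shows "pgf (\<lambda>n. f n + h n) z = pgf f z + pgf h z"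
  by (rule pgf_eqI) (use sums_add[OF pgf_sums[OF assms(1,3)] pgf_sums[OF assms(2,3)]] in \<open>simp add: distrib_right\<close>)

lemma pgf_sum:
  assumes "finite A" "\<And>r. r \<in> A \<Longrightarrow> summable (\<lambda>n. \<bar>f n r\<bar>)" "cmod z \<le> 1"
  shows "pgf (\<lambda>n. \<Sum>r\<in>A. f n r) z = (\<Sum>r\<in>A. pgf (\<lambda>n. f n r) z)"
  by (rule pgf_eqI) (use sums_sum[OF pgf_sums[OF assms(2,3)]] in \<open>simp add: sum_distrib_right\<close>)

definition overshoot_pgf :: "(nat \<Rightarrow> real) \<Rightarrow> nat \<Rightarrow> nat \<Rightarrow> complex \<Rightarrow> complex" where
  "overshoot_pgf g b j x = (\<Sum>k. complex_of_real (g (k + (b + 1 - j))) * x ^ (k + (b + 1 - j) + j))"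

lemma overshoot_pgf_sums:
  assumes "j \<le> b" "summable (\<lambda>n. \<bar>g n\<bar>)" "cmod x \<le> 1"
  shows "(\<lambda>n. complex_of_real (g (n + b - j)) * x ^ (n + b))
    sums (complex_of_real (g (b - j)) * x ^ b + overshoot_pgf g b j x)"
proof -
  define t where "t n = complex_of_real (g (n + b - j)) * x ^ (n + b)" for n
  have "summable (\<lambda>n. \<bar>g (n + (b - j))\<bar>)"
    using assms(2) by (subst summable_iff_shift)
  moreover have "norm (t n) \<le> \<bar>g (n + (b - j))\<bar>" for n
    using power_le_one[OF norm_ge_zero assms(3), of "n + b"] assms(1)
    by (simp add: t_def norm_mult norm_power mult_left_le Nat.add_diff_assoc)
  ultimately have "summable t"
    by (rule summable_comparison_test'[where N = 0])
  then have "summable (\<lambda>k. t (Suc k))"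
    by (subst summable_Suc_iff)
  moreover have "t (Suc k) = complex_of_real (g (k + (b + 1 - j))) * x ^ (k + (b + 1 - j) + j)" for k
    using assms(1) by (simp add: t_def)
  ultimately have "(\<lambda>k. t (Suc k)) sums overshoot_pgf g b j x"
    unfolding overshoot_pgf_def by (simp add: summable_sums)
  then show ?thesis
    by (subst (asm) sums_Suc_iff) (simp add: t_def[abs_def] add.commute)
qed

section \<open>One slot of group arrivals\<close>

definition arrival_conv :: "real \<Rightarrow> (nat \<Rightarrow> real) \<Rightarrow> (nat \<Rightarrow> real) \<Rightarrow> nat \<Rightarrow> real" where
  "arrival_conv lam g f n = (1 - lam) * f n + lam * (\<Sum>i=1..n. g i * f (n - i))"

definition arrival_pgf :: "real \<Rightarrow> (nat \<Rightarrow> real) \<Rightarrow> complex \<Rightarrow> complex" where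
  "arrival_pgf lam g x = complex_of_real (1 - lam) + complex_of_real lam * pgf g x"

lemma Kf_eq_pgf_arrival: "Kf lam g s r x = pgf (s r) (arrival_pgf lam g x)"
  unfolding Kf_def arrival_pgf_def ..

lemma Hf_eq_pgf_arrival: "Hf lam g v x = pgf v (arrival_pgf lam g x)"
  unfolding Hf_def arrival_pgf_def ..

lemma arrival_conv_nonneg:
  assumes "\<And>n. 0 \<le> f n" "\<And>n. 0 \<le> g n" "0 \<le> lam" "lam \<le> 1"
  shows "0 \<le> arrival_conv lam g f n"
  unfolding arrival_conv_def using assms by (intro add_nonneg_nonneg mult_nonneg_nonneg sum_nonneg) auto

lemma convolution_from_one:
  fixes g f :: "nat \<Rightarrow> 'a::semiring_0"
  assumes "g 0 = 0"
  shows "(\<Sum>i\<le>n. g i * f (n - i)) = (\<Sum>i=1..n. g i * f (n - i))"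
proof -
  have "{..n} = insert 0 {1..n}" by auto
  then show ?thesis using assms by simp
qed

lemma summable_arrival_conv:
  assumes "summable (\<lambda>n. \<bar>f n\<bar>)" "\<And>n. 0 \<le> g n" "g 0 = 0" "summable g"
  shows "summable (arrival_conv lam g f)"
proof -
  have "summable (\<lambda>n. \<Sum>i\<le>n. g i * f (n - i))"
    using Cauchy_product_sums[of g f] assms by (simp add: sums_iff)
  then show ?thesis
    unfolding arrival_conv_def convolution_from_one[of g, OF assms(3)]
    using assms(1) summable_rabs_cancel by (intro summable_add summable_mult) blast+
qed

lemma arrival_conv_sums:
  assumes f: "summable (\<lambda>n. \<bar>f n\<bar>)" and g: "\<And>n. 0 \<le> g n" "g 0 = 0" "summable g"
    and z: "cmod z \<le> 1"
  shows "(\<lambda>n. complex_of_real (arrival_conv lam g f n) * z ^ n) sums (arrival_pgf lam g z * pgf f z)"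
proof -
  have g_abs: "summable (\<lambda>n. \<bar>g n\<bar>)" using g by simp
  have cauchy_term: "(\<Sum>i\<le>n. (complex_of_real (g i) * z ^ i) * (complex_of_real (f (n - i)) * z ^ (n - i)))
      = complex_of_real (\<Sum>i=1..n. g i * f (n - i)) * z ^ n" for n
  proof -
    have "(\<Sum>i\<le>n. (complex_of_real (g i) * z ^ i) * (complex_of_real (f (n - i)) * z ^ (n - i)))
        = (\<Sum>i\<le>n. complex_of_real (g i * f (n - i)) * z ^ n)"
      by (rule sum.cong) (auto simp: power_add[symmetric])
    also have "\<dots> = complex_of_real (\<Sum>i\<le>n. g i * f (n - i)) * z ^ n"
      by (simp add: sum_distrib_right)
    finally show ?thesis by (simp only: convolution_from_one[of g, OF g(2)])
  qed
  have "(\<lambda>n. complex_of_real (\<Sum>i=1..n. g i * f (n - i)) * z ^ n) sums (pgf g z * pgf f z)"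
    using Cauchy_product_sums[OF summable_norm_pgf_terms[OF g_abs z] summable_norm_pgf_terms[OF f z]]
    unfolding pgf_def cauchy_term .
  from sums_add[OF sums_mult[OF pgf_sums[OF f z], of "complex_of_real (1 - lam)"]
      sums_mult[OF this, of "complex_of_real lam"]]
  show ?thesis unfolding arrival_conv_def arrival_pgf_def by (simp add: algebra_simps)
qed

lemma norm_arrival_pgf_le_1:
  assumes "0 \<le> lam" "lam \<le> 1" "\<And>n. 0 \<le> g n" "g sums 1" "cmod z \<le> 1"
  shows "cmod (arrival_pgf lam g z) \<le> 1"
proof -
  have "cmod (pgf g z) \<le> 1"
    using norm_pgf_le[of g z] assms by (simp add: sums_iff)
  then have "lam * cmod (pgf g z) \<le> lam"
    using assms(1) by (simp add: mult_left_le)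
  then have "cmod (complex_of_real (1 - lam)) + cmod (complex_of_real lam * pgf g z) \<le> 1"
    using assms(1,2) by (simp only: norm_mult norm_of_real)
  then show ?thesis
    unfolding arrival_pgf_def using norm_triangle_ineq order_trans by blast
qed

section \<open>Recurrences in the remaining time\<close>

lemma backward_recurrence_pgf:
  fixes F :: "nat \<Rightarrow> complex" and A C :: complex and w :: "nat \<Rightarrow> real"
  assumes A: "cmod A \<le> 1" and w: "\<And>n. 0 \<le> w n" "w 0 = 0" "summable w"
    and F_lim: "(\<lambda>u. cmod (F u)) \<longlonglongrightarrow> 0"
    and rec: "\<And>u. 1 \<le> u \<Longrightarrow> F u = A * F (u + 1) + complex_of_real (w u) * C"
  shows "A * F 1 = C * pgf w A"
proof -
  define W where "W = (\<lambda>K. \<Sum>k<K. complex_of_real (w (k + 1)) * A ^ (k + 1))"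
  have unrolled: "A * F 1 = C * W K + A ^ (K + 1) * F (K + 1)" for K
  proof (induction K)
    case (Suc K)
    then show ?case using rec[of "K + 1"] by (simp add: W_def algebra_simps)
  qed (simp add: W_def)
  have "W \<longlonglongrightarrow> pgf w A"
  proof -
    have "summable (\<lambda>n. \<bar>w n\<bar>)" using w by simp
    from pgf_sums[OF this A] have "(\<lambda>k. complex_of_real (w (Suc k)) * A ^ Suc k) sums pgf w A"
      using w(2) by (subst sums_Suc_iff) simp
    then show ?thesis by (simp add: W_def sums_def)
  qed
  then have "(\<lambda>K. C * W K) \<longlonglongrightarrow> C * pgf w A" by (intro tendsto_mult tendsto_const)
  moreover have "(\<lambda>K. A ^ (K + 1) * F (K + 1)) \<longlonglongrightarrow> 0"
  proof (rule tendsto_norm_zero_cancel, rule Lim_null_comparison)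
    have "norm (A ^ (K + 1) * F (K + 1)) \<le> cmod (F (K + 1))" for K
      unfolding norm_mult norm_power
      by (rule mult_left_le_one_le) (use power_le_one[OF norm_ge_zero A, of "K + 1"] in simp_all)
    then show "\<forall>\<^sub>F K in sequentially. norm (norm (A ^ (K + 1) * F (K + 1))) \<le> cmod (F (K + 1))"
      by simp
    show "(\<lambda>K. cmod (F (K + 1))) \<longlonglongrightarrow> 0"
      using LIMSEQ_Suc[OF F_lim] by simp
  qed
  ultimately have "(\<lambda>K. C * W K + A ^ (K + 1) * F (K + 1)) \<longlonglongrightarrow> C * pgf w A + 0"
    by (rule tendsto_add)
  then show ?thesis
    unfolding unrolled[symmetric] by (simp add: LIMSEQ_const_iff)
qed

lemma summable_on_slices:
  fixes f :: "nat \<Rightarrow> nat \<Rightarrow> real"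
  assumes S: "(\<lambda>(n, u). f n u) summable_on (UNIV \<times> {1..})"
    and nonneg: "\<And>n u. 1 \<le> u \<Longrightarrow> 0 \<le> f n u"
  shows summable_slice: "\<And>u. 1 \<le> u \<Longrightarrow> summable (\<lambda>n. f n u)"
    and slice_sums_tendsto_0: "(\<lambda>u. \<Sum>n. f n u) \<longlonglongrightarrow> 0"
proof -
  have S': "(\<lambda>(u, n). f n u) summable_on ({1..} \<times> UNIV)"
    using S by (subst (asm) summable_on_swap) (simp add: case_prod_unfold)
  have slice: "(\<lambda>n. f n u) summable_on UNIV" if "1 \<le> u" for u
    using summable_on_SigmaD1[of "\<lambda>u n. f n u" "{1..}" "\<lambda>_. UNIV" u] S' that by auto
  show summable: "summable (\<lambda>n. f n u)" if "1 \<le> u" for u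
    using slice[OF that] nonneg[OF that] by (simp add: summable_on_UNIV_nonneg_real_iff)
  have "(\<lambda>u. \<Sum>\<^sub>\<infinity>n. f n u) summable_on {1..}"
    using summable_on_Sigma_banach[of "\<lambda>u n. f n u" "{1..}" "\<lambda>_. UNIV"] S' by simp
  moreover have "(\<Sum>\<^sub>\<infinity>n. f n u) = (\<Sum>n. f n u)" if "1 \<le> u" for u
    using sums_unique[OF has_sum_imp_sums[OF has_sum_infsum[OF slice[OF that]]]] by simp
  ultimately have "(\<lambda>u. \<Sum>n. f n u) summable_on {1..}"
    by (rule summable_on_cong[THEN iffD1, rotated]) simp
  moreover have "{1..} = range Suc"
    by (simp only: One_nat_def atLeast_Suc_greaterThan greaterThan_0)
  ultimately have "(\<lambda>u. \<Sum>n. f n (Suc u)) summable_on UNIV"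
    by (simp add: summable_on_reindex o_def)
  moreover have "0 \<le> (\<Sum>n. f n (Suc u))" for u
    using summable[of "Suc u"] nonneg by (intro suminf_nonneg) auto
  ultimately have "summable (\<lambda>u. \<Sum>n. f n (Suc u))"
    by (simp add: summable_on_UNIV_nonneg_real_iff)
  then show "(\<lambda>u. \<Sum>n. f n u) \<longlonglongrightarrow> 0"
    by (rule LIMSEQ_imp_Suc[OF summable_LIMSEQ_zero])
qed

text \<open>Here q n u is the mass with n waiting and u slots of the current period left, and w u * e n
  is the mass entering when a period of length u starts.\<close>

lemma pgf_completion_epoch:
  fixes q :: "nat \<Rightarrow> nat \<Rightarrow> real" and g w e :: "nat \<Rightarrow> real"
  assumes q: "(\<lambda>(n, u). q n u) summable_on (UNIV \<times> {1..})" "\<And>n u. 1 \<le> u \<Longrightarrow> 0 \<le> q n u"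
    and g: "\<And>n. 0 \<le> g n" "g 0 = 0" "g sums 1"
    and w: "\<And>n. 0 \<le> w n" "w 0 = 0" "summable w"
    and e: "summable (\<lambda>n. \<bar>e n\<bar>)"
    and lam: "0 \<le> lam" "lam \<le> 1"
    and x: "cmod x \<le> 1"
    and rec: "\<And>n u. 1 \<le> u \<Longrightarrow> q n u = arrival_conv lam g (\<lambda>n. q n (u + 1)) n + w u * e n"
  shows "pgf (arrival_conv lam g (\<lambda>n. q n 1)) x = pgf e x * pgf w (arrival_pgf lam g x)"
proof -
  define A where "A = arrival_pgf lam g x"
  define F where "F u = pgf (\<lambda>n. q n u) x" for u
  have g_sum: "summable g" using g(3) by (rule sums_summable)
  have q_abs: "summable (\<lambda>n. \<bar>q n u\<bar>)" if "1 \<le> u" for u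
    using summable_slice[OF q that] q(2)[OF that] by simp
  have "F u = A * F (u + 1) + complex_of_real (w u) * pgf e x" if u: "1 \<le> u" for u
  proof -
    have "(\<lambda>n. complex_of_real (arrival_conv lam g (\<lambda>n. q n (u + 1)) n) * x ^ n
        + complex_of_real (w u) * (complex_of_real (e n) * x ^ n))
        sums (A * F (u + 1) + complex_of_real (w u) * pgf e x)"
      unfolding A_def F_def using u
      by (intro sums_add sums_mult arrival_conv_sums pgf_sums q_abs g(1,2) g_sum e x) simp
    then show ?thesis
      unfolding F_def by (intro pgf_eqI) (simp add: rec[OF u] ring_distribs mult_ac)
  qed
  moreover have "(\<lambda>u. cmod (F u)) \<longlonglongrightarrow> 0"
  proof (rule Lim_null_comparison[OF _ slice_sums_tendsto_0[OF q]])
    show "\<forall>\<^sub>F u in sequentially. norm (cmod (F u)) \<le> (\<Sum>n. q n u)"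
      unfolding F_def using norm_pgf_le[OF q(2) summable_slice[OF q] x]
      by (intro eventually_sequentiallyI[of 1]) simp
  qed
  moreover have "cmod A \<le> 1"
    unfolding A_def by (rule norm_arrival_pgf_le_1[OF lam g(1,3) x])
  ultimately have "A * F 1 = pgf e x * pgf w A"
    using backward_recurrence_pgf[OF _ w] by blast
  moreover have "pgf (arrival_conv lam g (\<lambda>n. q n 1)) x = A * F 1"
    unfolding A_def F_def by (intro pgf_eqI arrival_conv_sums q_abs g(1,2) g_sum x) simp
  ultimately show ?thesis by (simp add: A_def)
qed

section \<open>Renewal coefficients\<close>

declare ecoef.simps [simp del]

fun renewal_seq :: "(nat \<Rightarrow> real) \<Rightarrow> nat \<Rightarrow> real" where
  "renewal_seq g 0 = 1"
| "renewal_seq g (Suc m) = (\<Sum>k=1..Suc m. g k * renewal_seq g (Suc m - k))"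

lemma renewal_seq_pos: "0 < m \<Longrightarrow> renewal_seq g m = (\<Sum>k=1..m. g k * renewal_seq g (m - k))"
  by (cases m) auto

lemma ecoef_eq_renewal_seq: "i \<le> n \<Longrightarrow> ecoef g n i = renewal_seq g (n - i)"
proof (induction "n - i" arbitrary: i rule: less_induct)
  case less
  show ?case
  proof (cases "i = n")
    case False
    then have "i < n" using less.prems by simp
    define m where "m = n - i"
    have m: "0 < m" using \<open>i < n\<close> by (simp add: m_def)
    have "ecoef g n i = (\<Sum>j=i+1..n-1. ecoef g n j * g (j - i)) + g (n - i)"
      using \<open>i < n\<close> by (subst ecoef.simps) auto
    also have "\<dots> = (\<Sum>j=i+1..n-1. renewal_seq g (n - j) * g (j - i)) + g m"
      using less.hyps by (auto simp: m_def intro!: sum.cong)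
    also have "(\<Sum>j=i+1..n-1. renewal_seq g (n - j) * g (j - i)) = (\<Sum>k=1..m-1. g k * renewal_seq g (m - k))"
      by (rule sum.reindex_bij_witness[where i = "\<lambda>k. k + i" and j = "\<lambda>j. j - i"])
        (auto simp: m_def)
    also have "\<dots> + g m = (\<Sum>k=1..m. g k * renewal_seq g (m - k))"
    proof -
      have "{1..m-1} = {1..<m}" using m by auto
      then show ?thesis using m by (simp add: sum.last_plus add.commute)
    qed
    also have "\<dots> = renewal_seq g (n - i)"
      using renewal_seq_pos[OF m] by (simp add: m_def)
    finally show ?thesis .
  qed (subst ecoef.simps, simp)
qed

lemma renewal_equation_solution:
  fixes L c g :: "nat \<Rightarrow> real"
  assumes rec: "\<And>n. n < a \<Longrightarrow> L n = (\<Sum>i=1..n. g i * L (n - i)) + c n" and "j < a"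
  shows "L j = (\<Sum>n\<le>j. ecoef g j n * c n)"
proof -
  have "L j = (\<Sum>n\<le>j. renewal_seq g (j - n) * c n)" using \<open>j < a\<close>
  proof (induction j rule: less_induct)
    case (less j)
    have "(\<Sum>i=1..j. g i * L (j - i))
        = (\<Sum>i=1..j. \<Sum>n\<le>j-i. g i * renewal_seq g (j - i - n) * c n)"
      using less by (intro sum.cong) (auto simp: sum_distrib_left mult.assoc)
    also have "\<dots> = (\<Sum>i\<in>{1..j}. \<Sum>n\<in>{n. n \<in> {..<j} \<and> n + i \<le> j}. g i * renewal_seq g (j - i - n) * c n)"
      by (intro sum.cong refl) (auto simp: set_eq_iff)
    also have "\<dots> = (\<Sum>n<j. \<Sum>i\<in>{i. i \<in> {1..j} \<and> n + i \<le> j}. g i * renewal_seq g (j - i - n) * c n)"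
      by (rule sum.swap_restrict) auto
    also have "\<dots> = (\<Sum>n<j. renewal_seq g (j - n) * c n)"
    proof (intro sum.cong refl)
      fix n assume "n \<in> {..<j}"
      then have "{i. i \<in> {1..j} \<and> n + i \<le> j} = {1..j-n}" "0 < j - n" by auto
      then show "(\<Sum>i\<in>{i. i \<in> {1..j} \<and> n + i \<le> j}. g i * renewal_seq g (j - i - n) * c n)
          = renewal_seq g (j - n) * c n"
        by (simp add: renewal_seq_pos sum_distrib_right add.commute)
    qed
    finally show ?case
      using rec[OF less.prems] by (simp add: lessThan_Suc_atMost[symmetric])
  qed
  also have "\<dots> = (\<Sum>n\<le>j. ecoef g j n * c n)"
    by (intro sum.cong refl) (simp add: ecoef_eq_renewal_seq)
  finally show ?thesis .
qed

lemma sum_lower_triangle_swap: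
  fixes f X :: "nat \<Rightarrow> 'a::comm_semiring_0" and E :: "nat \<Rightarrow> nat \<Rightarrow> 'a"
  shows "(\<Sum>n<a. f n * (\<Sum>j=n..a-1. E j n * X j)) = (\<Sum>j<a. (\<Sum>n\<le>j. E j n * f n) * X j)"
proof -
  have "(\<Sum>n<a. f n * (\<Sum>j=n..a-1. E j n * X j))
      = (\<Sum>n<a. \<Sum>j\<in>{j. j \<in> {..<a} \<and> n \<le> j}. E j n * f n * X j)"
  proof (intro sum.cong refl)
    fix n assume "n \<in> {..<a}"
    then have "{j. j \<in> {..<a} \<and> n \<le> j} = {n..a-1}" by auto
    then show "f n * (\<Sum>j=n..a-1. E j n * X j) = (\<Sum>j\<in>{j. j \<in> {..<a} \<and> n \<le> j}. E j n * f n * X j)"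
      by (simp add: sum_distrib_left mult_ac)
  qed
  also have "\<dots> = (\<Sum>j<a. \<Sum>n\<in>{n. n \<in> {..<a} \<and> n \<le> j}. E j n * f n * X j)"
    by (rule sum.swap_restrict) auto
  also have "\<dots> = (\<Sum>j<a. (\<Sum>n\<le>j. E j n * f n) * X j)"
  proof (intro sum.cong refl)
    fix j assume "j \<in> {..<a}"
    then have "{n. n \<in> {..<a} \<and> n \<le> j} = {..j}" by auto
    then show "(\<Sum>n\<in>{n. n \<in> {..<a} \<and> n \<le> j}. E j n * f n * X j) = (\<Sum>n\<le>j. E j n * f n) * X j"
      by (simp add: sum_distrib_right)
  qed
  finally show ?thesis .
qed

text \<open>N(x,y) with the queue data abstracted: P n and Qv n stand for p^+_n and Q^+_n, K i for
  K^(i)(x), H for H(x), E for e and W j for the overshoot sum.\<close>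

definition bulk_numerator :: "nat \<Rightarrow> nat \<Rightarrow> complex \<Rightarrow> (nat \<Rightarrow> complex) \<Rightarrow> (nat \<Rightarrow> nat \<Rightarrow> complex)
    \<Rightarrow> (nat \<Rightarrow> complex) \<Rightarrow> (nat \<Rightarrow> complex) \<Rightarrow> complex \<Rightarrow> complex \<Rightarrow> complex
    \<Rightarrow> (nat \<Rightarrow> complex) \<Rightarrow> (nat \<Rightarrow> complex) \<Rightarrow> complex" where
  "bulk_numerator a b dl G E W K H x y P Qv =
     (\<Sum>n<a. P n * x ^ n) * (H - 1) * y ^ b * K b
     + (\<Sum>n<a. Qv n *
         (x ^ n * (dl * H - 1) * y ^ b * K b
          + (1 - dl) * (\<Sum>j=n..a-1. E j n *
              ((\<Sum>i=a..b. G (i - j) * K i * ((x ^ b - K b) * y ^ i + y ^ b * K b))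
               + W j * y ^ b * K b))))
     + (\<Sum>n=a..b-1. (P n + Qv n) *
         (K b * K n * (y ^ b - y ^ n) + K n * x ^ b * y ^ n - K b * x ^ n * y ^ b))"

lemma bulk_numerator_scale:
  "bulk_numerator a b dl G E W K H x y (\<lambda>n. c * P n) (\<lambda>n. c * Qv n)
    = c * bulk_numerator a b dl G E W K H x y P Qv"
proof -
  have factor: "(\<Sum>n\<in>A. c * f n * Z n) = c * (\<Sum>n\<in>A. f n * Z n)"
    for f Z :: "nat \<Rightarrow> complex" and A
    by (simp add: sum_distrib_left mult.assoc)
  have factor2: "(\<Sum>n\<in>A. (c * P n + c * Qv n) * Z n) = c * (\<Sum>n\<in>A. (P n + Qv n) * Z n)"
    for Z and A :: "nat set"
    by (simp add: sum_distrib_left algebra_simps)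
  show ?thesis
    unfolding bulk_numerator_def factor factor2 by (simp add: algebra_simps)
qed

lemma bulk_numerator_identity:
  fixes K G W P Qv l L :: "nat \<Rightarrow> complex" and E :: "nat \<Rightarrow> nat \<Rightarrow> complex"
    and H x y Cb dl :: complex
  assumes ab: "1 \<le> a" "a \<le> b"
    and balance: "(x ^ b - K b) * Cb = (\<Sum>r=a..<b. (P r + Qv r + l r) * K r)
        + (\<Sum>n<a. (P n + dl * Qv n) * x ^ n) * H
        + (\<Sum>i<a. L i * (G (b - i) * x ^ b + W i)) - (\<Sum>n<b. (P n + Qv n) * x ^ n)"
    and l: "\<And>r. r \<in> {a..<b} \<Longrightarrow> l r = (\<Sum>i<a. G (r - i) * L i)"
    and L: "\<And>j. j < a \<Longrightarrow> L j = (1 - dl) * (\<Sum>n\<le>j. E j n * Qv n)"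
  shows "(x ^ b - K b) * ((\<Sum>r=a..<b. y ^ r * (P r + Qv r + l r) * K r) + y ^ b * Cb * K b)
         = bulk_numerator a b dl G E W K H x y P Qv"
proof -
  define c where "c r = (x ^ b - K b) * y ^ r * K r + y ^ b * K b * K r" for r
  define X where "X j = (\<Sum>i=a..b. G (i - j) * K i * ((x ^ b - K b) * y ^ i + y ^ b * K b))
    + W j * y ^ b * K b" for j
  define R where "R = (\<Sum>i<a. L i * (G (b - i) * x ^ b + W i))"
  define D where "D = (\<Sum>n<a. (P n + dl * Qv n) * x ^ n)"
  have split_b: "(\<Sum>n<b. f n) = (\<Sum>n<a. f n) + (\<Sum>n=a..<b. f n)" for f :: "nat \<Rightarrow> complex"
    using ab by (metis atLeast0LessThan sum.atLeastLessThan_concat zero_le)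
  have "(x ^ b - K b) * ((\<Sum>r=a..<b. y ^ r * (P r + Qv r + l r) * K r) + y ^ b * Cb * K b)
      = (\<Sum>r=a..<b. (x ^ b - K b) * y ^ r * (P r + Qv r + l r) * K r) + y ^ b * K b * ((x ^ b - K b) * Cb)"
    by (simp add: sum_distrib_left algebra_simps)
  also have "\<dots> = (\<Sum>r=a..<b. (P r + Qv r + l r) * c r)
      + y ^ b * K b * (D * H + R - (\<Sum>n<b. (P n + Qv n) * x ^ n))"
    unfolding balance R_def c_def D_def
    by (simp add: sum_distrib_left sum.distrib[symmetric] algebra_simps)
  also have "\<dots> = (\<Sum>r=a..<b. (P r + Qv r) * c r) - y ^ b * K b * (\<Sum>n=a..<b. (P n + Qv n) * x ^ n)
        + y ^ b * K b * (D * H - (\<Sum>n<a. (P n + Qv n) * x ^ n))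
        + ((\<Sum>r=a..<b. l r * c r) + y ^ b * K b * R)"
    unfolding split_b by (simp add: sum.distrib distrib_right algebra_simps)
  also have "(\<Sum>r=a..<b. (P r + Qv r) * c r) - y ^ b * K b * (\<Sum>n=a..<b. (P n + Qv n) * x ^ n)
      = (\<Sum>n=a..b-1. (P n + Qv n) * (K b * K n * (y ^ b - y ^ n) + K n * x ^ b * y ^ n - K b * x ^ n * y ^ b))"
  proof -
    have "{a..b-1} = {a..<b}" using ab by auto
    then show ?thesis by (simp add: c_def sum_distrib_left sum_subtractf[symmetric] algebra_simps)
  qed
  also have "y ^ b * K b * (D * H - (\<Sum>n<a. (P n + Qv n) * x ^ n))
      = (\<Sum>n<a. P n * x ^ n) * (H - 1) * y ^ b * K b + (\<Sum>n<a. Qv n * (x ^ n * (dl * H - 1) * y ^ b * K b))"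
    unfolding D_def by (simp add: sum_distrib_left sum_distrib_right sum_subtractf[symmetric] sum.distrib[symmetric] algebra_simps)
  also have "(\<Sum>r=a..<b. l r * c r) + y ^ b * K b * R = (\<Sum>j<a. L j * X j)"
  proof -
    have "(\<Sum>r=a..<b. l r * c r) = (\<Sum>j<a. L j * (\<Sum>r=a..<b. G (r - j) * c r))"
      using l by (simp add: sum_distrib_left sum_distrib_right mult_ac sum.swap[of _ "{a..<b}"])
    moreover have "X j = (\<Sum>r=a..<b. G (r - j) * c r) + y ^ b * K b * (G (b - j) * x ^ b + W j)" for j
      using ab by (simp add: X_def c_def atLeastLessThanSuc_atLeastAtMost[symmetric] algebra_simps)
    ultimately show ?thesis
      unfolding R_def by (simp add: sum_distrib_left sum.distrib algebra_simps)
  qed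
  also have "\<dots> = (\<Sum>n<a. Qv n * ((1 - dl) * (\<Sum>j=n..a-1. E j n * X j)))"
    using sum_lower_triangle_swap[where f = "\<lambda>n. (1 - dl) * Qv n" and X = X]
    by (simp add: L sum_distrib_left mult_ac)
  finally show ?thesis
    unfolding bulk_numerator_def X_def by (simp add: sum.distrib distrib_left add_ac)
qed

lemma summable_on_fix_middle:
  fixes f :: "'a \<Rightarrow> 'b \<Rightarrow> 'c \<Rightarrow> 'd::banach"
  assumes "(\<lambda>(n, r, u). f n r u) summable_on (A \<times> B \<times> C)" "r \<in> B"
  shows "(\<lambda>(n, u). f n r u) summable_on (A \<times> C)"
proof -
  define h :: "'a \<times> 'c \<Rightarrow> 'a \<times> 'b \<times> 'c" where "h = (\<lambda>(n, u). (n, r, u))"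
  have "inj_on h (A \<times> C)" by (auto simp: h_def inj_on_def)
  moreover have "h ` (A \<times> C) \<subseteq> A \<times> B \<times> C" using assms(2) by (auto simp: h_def)
  ultimately have "((\<lambda>(n, r, u). f n r u) \<circ> h) summable_on (A \<times> C)"
    using summable_on_subset_banach[OF assms(1)] summable_on_reindex by blast
  then show ?thesis by (simp add: h_def o_def case_prod_unfold)
qed

locale bulk_vacation_queue =
  fixes a b \<delta> :: nat and lam :: real
    and g :: "nat \<Rightarrow> real" and s :: "nat \<Rightarrow> nat \<Rightarrow> real" and v :: "nat \<Rightarrow> real"
    and p0 :: "nat \<Rightarrow> real" and p :: "nat \<Rightarrow> nat \<Rightarrow> nat \<Rightarrow> real" and Q :: "nat \<Rightarrow> nat \<Rightarrow> real"
  assumes ab: "1 \<le> a" "a \<le> b"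
    and lam: "0 \<le> lam" "lam \<le> 1"
    and g: "\<And>m. 0 \<le> g m" "g 0 = 0" "g sums 1"
    and s: "\<And>r n. r \<in> {a..b} \<Longrightarrow> 0 \<le> s r n" "\<And>r. r \<in> {a..b} \<Longrightarrow> s r 0 = 0"
      "\<And>r. r \<in> {a..b} \<Longrightarrow> summable (s r)"
    and v: "\<And>n. 0 \<le> v n" "v 0 = 0" "summable v"
    and delta: "\<delta> = 0 \<or> \<delta> = 1"
    and p0_nonneg: "\<And>n. n < a \<Longrightarrow> 0 \<le> p0 n"
    and p_nonneg: "\<And>n r u. r \<in> {a..b} \<Longrightarrow> 1 \<le> u \<Longrightarrow> 0 \<le> p n r u"
    and Q_nonneg: "\<And>n u. 1 \<le> u \<Longrightarrow> 0 \<le> Q n u"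
    and E1: "p0 0 = (1 - real \<delta>) * ((1 - lam) * p0 0 + (1 - lam) * Q 0 1)"
    and E2: "\<And>n. n \<in> {1..a-1} \<Longrightarrow> p0 n = (1 - real \<delta>) * ((1 - lam) * p0 n
               + lam * (\<Sum>i=1..n. g i * p0 (n - i)) + (1 - lam) * Q n 1 + lam * (\<Sum>i=1..n. g i * Q (n - i) 1))"
    and E3: "\<And>r u. r \<in> {a..b} \<Longrightarrow> 1 \<le> u \<Longrightarrow> p 0 r u = (1 - lam) * p 0 r (u + 1)
               + s r u * ((\<Sum>m=a..b. (1 - lam) * p r m 1 + lam * (\<Sum>i=1..r. g i * p (r - i) m 1))
                 + (1 - lam) * Q r 1 + lam * (\<Sum>i=1..r. g i * Q (r - i) 1)
                 + (1 - real \<delta>) * lam * (\<Sum>i=0..a-1. g (r - i) * p0 i))"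
    and E4: "\<And>n r u. 1 \<le> n \<Longrightarrow> r \<in> {a..b-1} \<Longrightarrow> 1 \<le> u \<Longrightarrow> p n r u = (1 - lam) * p n r (u + 1)
               + lam * (\<Sum>i=1..n. g i * p (n - i) r (u + 1))"
    and E5: "\<And>n u. 1 \<le> n \<Longrightarrow> 1 \<le> u \<Longrightarrow> p n b u = (1 - lam) * p n b (u + 1)
               + lam * (\<Sum>i=1..n. g i * p (n - i) b (u + 1))
               + s b u * ((\<Sum>m=a..b. (1 - lam) * p (n + b) m 1 + lam * (\<Sum>i=1..n+b. g i * p (n + b - i) m 1))
                 + (1 - lam) * Q (n + b) 1 + lam * (\<Sum>i=1..n+b. g i * Q (n + b - i) 1)
                 + (1 - real \<delta>) * lam * (\<Sum>i=0..a-1. g (n + b - i) * p0 i))"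
    and E6: "\<And>u. 1 \<le> u \<Longrightarrow> Q 0 u = (1 - lam) * Q 0 (u + 1)
               + (1 - lam) * ((\<Sum>m=a..b. p 0 m 1) + real \<delta> * Q 0 1) * v u"
    and E7: "\<And>n u. n \<in> {1..a-1} \<Longrightarrow> 1 \<le> u \<Longrightarrow> Q n u = (1 - lam) * Q n (u + 1)
               + lam * (\<Sum>i=1..n. g i * Q (n - i) (u + 1))
               + v u * ((1 - lam) * ((\<Sum>m=a..b. p n m 1) + real \<delta> * Q n 1)
                 + lam * (\<Sum>i=1..n. g i * ((\<Sum>m=a..b. p (n - i) m 1) + real \<delta> * Q (n - i) 1)))"
    and E8: "\<And>n u. a \<le> n \<Longrightarrow> 1 \<le> u \<Longrightarrow> Q n u = (1 - lam) * Q n (u + 1)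
               + lam * (\<Sum>i=1..n. g i * Q (n - i) (u + 1))"
    and p_summable: "(\<lambda>(n, r, u). p n r u) summable_on (UNIV \<times> {a..b} \<times> {1..})"
    and Q_summable: "(\<lambda>(n, u). Q n u) summable_on (UNIV \<times> {1..})"
begin

text \<open>For m \<ge> a, service_start_mass m is the bracket of (E3) and (E5), the mass of epochs at which
  a service starts with m waiting; dormant_mass i is the mass leaving the dormant state i through
  an arrival (g (m - i) vanishes for m \<le> i because g 0 = 0).\<close>

definition departure_mass :: "nat \<Rightarrow> nat \<Rightarrow> real" where
  "departure_mass n r = arrival_conv lam g (\<lambda>n. p n r 1) n"

definition departure_total :: "nat \<Rightarrow> real" where
  "departure_total n = (\<Sum>r=a..b. departure_mass n r)"

definition vacation_end_mass :: "nat \<Rightarrow> real" where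
  "vacation_end_mass n = arrival_conv lam g (\<lambda>n. Q n 1) n"

definition dormant_mass :: "nat \<Rightarrow> real" where
  "dormant_mass i = (1 - real \<delta>) * lam * p0 i"

definition dormant_arrival_mass :: "nat \<Rightarrow> real" where
  "dormant_arrival_mass m = (\<Sum>i<a. g (m - i) * dormant_mass i)"

definition service_start_mass :: "nat \<Rightarrow> real" where
  "service_start_mass m = departure_total m + vacation_end_mass m + dormant_arrival_mass m"

lemma pplus_eq: "pplus lam g a b p Q n r = departure_mass n r / tau a b p Q"
  by (simp add: pplus_def departure_mass_def arrival_conv_def)

lemma pplusn_eq: "pplusn lam g a b p Q n = departure_total n / tau a b p Q"
  by (simp add: pplusn_def departure_total_def pplus_eq sum_divide_distrib)

lemma Qplus_eq: "Qplus lam g a b p Q n = vacation_end_mass n / tau a b p Q"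
  by (simp add: Qplus_def vacation_end_mass_def arrival_conv_def)

lemma g_summable: "summable g"
  using g(3) by (rule sums_summable)

lemma p_slice_summable_on: "r \<in> {a..b} \<Longrightarrow> (\<lambda>(n, u). p n r u) summable_on (UNIV \<times> {1..})"
  by (rule summable_on_fix_middle[OF p_summable])

lemma departure_mass_nonneg: "r \<in> {a..b} \<Longrightarrow> 0 \<le> departure_mass n r"
  unfolding departure_mass_def using p_nonneg g(1) lam by (intro arrival_conv_nonneg) auto

lemma summable_departure_mass: "r \<in> {a..b} \<Longrightarrow> summable (\<lambda>n. departure_mass n r)"
  unfolding departure_mass_def
  using summable_slice[OF p_slice_summable_on p_nonneg, of r 1] p_nonneg[of r 1]
  by (intro summable_arrival_conv g(1,2) g_summable) auto

lemma vacation_end_mass_nonneg: "0 \<le> vacation_end_mass n"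
  unfolding vacation_end_mass_def using Q_nonneg g(1) lam by (intro arrival_conv_nonneg) auto

lemma summable_vacation_end_mass: "summable vacation_end_mass"
  unfolding vacation_end_mass_def
  using summable_slice[OF Q_summable Q_nonneg, of 1] Q_nonneg[of 1]
  by (intro summable_arrival_conv g(1,2) g_summable) auto

lemma departure_total_nonneg: "0 \<le> departure_total n"
  unfolding departure_total_def by (intro sum_nonneg departure_mass_nonneg)

lemma summable_departure_total: "summable departure_total"
  unfolding departure_total_def by (intro summable_sum summable_departure_mass)

lemma dormant_mass_nonneg: "i < a \<Longrightarrow> 0 \<le> dormant_mass i"
  unfolding dormant_mass_def using delta lam p0_nonneg by auto

lemma dormant_arrival_mass_nonneg: "0 \<le> dormant_arrival_mass m"
  unfolding dormant_arrival_mass_def using g(1) dormant_mass_nonneg by (intro sum_nonneg) auto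

lemma summable_dormant_arrival_mass: "summable dormant_arrival_mass"
proof -
  have "summable (\<lambda>m. g (m - i))" for i
    using g_summable summable_iff_shift[of "\<lambda>m. g (m - i)" i] by simp
  then show ?thesis
    unfolding dormant_arrival_mass_def by (intro summable_sum summable_mult2)
qed

lemma service_start_mass_nonneg: "0 \<le> service_start_mass m"
  unfolding service_start_mass_def
  using departure_total_nonneg vacation_end_mass_nonneg dormant_arrival_mass_nonneg by simp

lemma summable_service_start_mass: "summable service_start_mass"
  unfolding service_start_mass_def
  by (intro summable_add summable_departure_total summable_vacation_end_mass summable_dormant_arrival_mass)

lemma service_start_bracket:
  "(\<Sum>m'=a..b. (1 - lam) * p m m' 1 + lam * (\<Sum>i=1..m. g i * p (m - i) m' 1))
    + (1 - lam) * Q m 1 + lam * (\<Sum>i=1..m. g i * Q (m - i) 1)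
    + (1 - real \<delta>) * lam * (\<Sum>i=0..a-1. g (m - i) * p0 i) = service_start_mass m"
proof -
  have "{0..a-1} = {..<a}" using ab by auto
  then have "(1 - real \<delta>) * lam * (\<Sum>i=0..a-1. g (m - i) * p0 i) = dormant_arrival_mass m"
    unfolding dormant_arrival_mass_def dormant_mass_def by (simp add: sum_distrib_left mult_ac)
  then show ?thesis
    unfolding service_start_mass_def departure_total_def departure_mass_def vacation_end_mass_def
      arrival_conv_def by simp
qed

lemma departure_total_expand:
  "departure_total n = (1 - lam) * (\<Sum>m=a..b. p n m 1) + lam * (\<Sum>i=1..n. g i * (\<Sum>m=a..b. p (n - i) m 1))"
proof -
  have "(\<Sum>m=a..b. \<Sum>i=1..n. g i * p (n - i) m 1) = (\<Sum>i=1..n. g i * (\<Sum>m=a..b. p (n - i) m 1))"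
    by (subst sum.swap) (simp add: sum_distrib_left)
  then show ?thesis
    unfolding departure_total_def departure_mass_def arrival_conv_def
    by (simp add: sum.distrib sum_distrib_left[symmetric])
qed

lemma p_recurrence_below_b:
  assumes r: "r \<in> {a..<b}" and u: "1 \<le> u"
  shows "p n r u = arrival_conv lam g (\<lambda>n. p n r (u + 1)) n + s r u * (if n = 0 then service_start_mass r else 0)"
proof (cases "n = 0")
  case True
  have "p 0 r u = (1 - lam) * p 0 r (u + 1) + s r u * service_start_mass r"
    using E3[of r u] r u unfolding service_start_bracket by simp
  then show ?thesis using True by (simp add: arrival_conv_def)
next
  case False
  have "r \<in> {a..b-1}" using r by auto
  then show ?thesis using E4[of n r u] False u by (simp add: arrival_conv_def)
qed

lemma p_recurrence_b:
  assumes u: "1 \<le> u"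
  shows "p n b u = arrival_conv lam g (\<lambda>n. p n b (u + 1)) n + s b u * service_start_mass (n + b)"
proof (cases "n = 0")
  case True
  have "p 0 b u = (1 - lam) * p 0 b (u + 1) + s b u * service_start_mass b"
    using E3[of b u] ab u unfolding service_start_bracket by simp
  then show ?thesis using True by (simp add: arrival_conv_def)
next
  case False
  then show ?thesis using E5[of n u] u unfolding service_start_bracket by (simp add: arrival_conv_def)
qed

lemma Q_recurrence:
  assumes u: "1 \<le> u"
  shows "Q n u = arrival_conv lam g (\<lambda>n. Q n (u + 1)) n
    + v u * (if n < a then departure_total n + real \<delta> * vacation_end_mass n else 0)"
proof -
  consider "a \<le> n" | "n = 0" | "n \<in> {1..a-1}" by fastforce
  then show ?thesis
  proof cases
    case 1
    then show ?thesis using E8[OF 1 u] by (simp add: arrival_conv_def)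
  next
    case 2
    then show ?thesis using E6[OF u] ab
      by (simp add: arrival_conv_def departure_total_expand vacation_end_mass_def algebra_simps)
  next
    case 3
    have "(\<Sum>i=1..n. g i * ((\<Sum>m=a..b. p (n - i) m 1) + real \<delta> * Q (n - i) 1))
        = (\<Sum>i=1..n. g i * (\<Sum>m=a..b. p (n - i) m 1)) + real \<delta> * (\<Sum>i=1..n. g i * Q (n - i) 1)"
      by (simp add: distrib_left sum.distrib sum_distrib_left mult_ac)
    moreover have "n < a" using 3 ab by auto
    ultimately show ?thesis using E7[OF 3 u]
      by (simp add: arrival_conv_def departure_total_expand vacation_end_mass_def algebra_simps)
  qed
qed

lemma pgf_departure_mass_below_b:
  assumes r: "r \<in> {a..<b}" and x: "cmod x \<le> 1"
  shows "pgf (\<lambda>n. departure_mass n r) x = service_start_mass r * Kf lam g s r x"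
proof -
  have r': "r \<in> {a..b}" using r by auto
  have "summable (\<lambda>n. \<bar>if n = 0 then service_start_mass r else 0\<bar>)"
    by (rule summable_finite[of "{0}"]) auto
  from pgf_completion_epoch[OF p_slice_summable_on[OF r'] p_nonneg[OF r'] g s(1)[OF r'] s(2)[OF r']
      s(3)[OF r'] this lam x p_recurrence_below_b[OF r]]
  show ?thesis
    unfolding departure_mass_def Kf_eq_pgf_arrival by (simp add: pgf_finite_support[of 1])
qed

lemma pgf_departure_mass_b:
  assumes x: "cmod x \<le> 1"
  shows "pgf (\<lambda>n. departure_mass n b) x = pgf (\<lambda>n. service_start_mass (n + b)) x * Kf lam g s b x"
proof -
  have b: "b \<in> {a..b}" using ab by auto
  have "summable (\<lambda>n. \<bar>service_start_mass (n + b)\<bar>)"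
    using summable_service_start_mass service_start_mass_nonneg by (simp add: summable_iff_shift)
  from pgf_completion_epoch[OF p_slice_summable_on[OF b] p_nonneg[OF b] g s(1)[OF b] s(2)[OF b]
      s(3)[OF b] this lam x p_recurrence_b]
  show ?thesis
    unfolding departure_mass_def Kf_eq_pgf_arrival by simp
qed

lemma pgf_vacation_end_mass:
  assumes x: "cmod x \<le> 1"
  shows "pgf vacation_end_mass x
    = (\<Sum>n<a. complex_of_real (departure_total n + real \<delta> * vacation_end_mass n) * x ^ n) * Hf lam g v x"
proof -
  have "summable (\<lambda>n. \<bar>if n < a then departure_total n + real \<delta> * vacation_end_mass n else 0\<bar>)"
    by (rule summable_finite[of "{..<a}"]) auto
  from pgf_completion_epoch[OF Q_summable Q_nonneg g v this lam x Q_recurrence]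
  show ?thesis
    unfolding vacation_end_mass_def[abs_def] Hf_eq_pgf_arrival by (simp add: pgf_finite_support[of a])
qed

lemma dormant_mass_renewal:
  assumes "j < a"
  shows "dormant_mass j = (1 - real \<delta>) * (\<Sum>n\<le>j. ecoef g j n * vacation_end_mass n)"
proof -
  have "dormant_mass n = (\<Sum>i=1..n. g i * dormant_mass (n - i)) + (1 - real \<delta>) * vacation_end_mass n"
    if "n < a" for n
  proof (cases "\<delta> = 0")
    case True
    show ?thesis
    proof (cases "n = 0")
      case True
      then show ?thesis
        unfolding dormant_mass_def vacation_end_mass_def arrival_conv_def
        using E1 \<open>\<delta> = 0\<close> by (simp add: algebra_simps)
    next
      case False
      then have "n \<in> {1..a-1}" using that by auto
      then show ?thesis
        unfolding dormant_mass_def vacation_end_mass_def arrival_conv_def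
        using E2 \<open>\<delta> = 0\<close> by (simp add: sum_distrib_left algebra_simps)
    qed
  next
    case False
    then have "\<delta> = 1" using delta by simp
    then show ?thesis unfolding dormant_mass_def by simp
  qed
  from renewal_equation_solution[OF this assms] show ?thesis
    by (simp add: sum_distrib_left mult_ac)
qed

lemma dormant_arrival_tail:
  assumes x: "cmod x \<le> 1"
  shows "pgf dormant_arrival_mass x - (\<Sum>n<b. complex_of_real (dormant_arrival_mass n) * x ^ n)
    = (\<Sum>i<a. complex_of_real (dormant_mass i) * (complex_of_real (g (b - i)) * x ^ b + overshoot_pgf g b i x))"
proof -
  have "summable (\<lambda>n. \<bar>dormant_arrival_mass n\<bar>)"
    using summable_dormant_arrival_mass dormant_arrival_mass_nonneg by simp
  from sums_iff_shift'[THEN iffD2, OF pgf_sums[OF this x]]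
  have "(\<lambda>n. complex_of_real (dormant_arrival_mass (n + b)) * x ^ (n + b))
      sums (pgf dormant_arrival_mass x - (\<Sum>n<b. complex_of_real (dormant_arrival_mass n) * x ^ n))" .
  moreover have "(\<lambda>n. complex_of_real (dormant_arrival_mass (n + b)) * x ^ (n + b))
      sums (\<Sum>i<a. complex_of_real (dormant_mass i) * (complex_of_real (g (b - i)) * x ^ b + overshoot_pgf g b i x))"
  proof -
    have "summable (\<lambda>n. \<bar>g n\<bar>)" using g(1) g_summable by simp
    then have "(\<lambda>n. \<Sum>i<a. complex_of_real (dormant_mass i) * (complex_of_real (g (n + b - i)) * x ^ (n + b)))
        sums (\<Sum>i<a. complex_of_real (dormant_mass i) * (complex_of_real (g (b - i)) * x ^ b + overshoot_pgf g b i x))"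
      using ab x by (intro sums_sum sums_mult overshoot_pgf_sums) auto
    then show ?thesis
      by (simp add: dormant_arrival_mass_def sum_distrib_left mult_ac)
  qed
  ultimately show ?thesis by (rule sums_unique2)
qed

lemma service_start_balance:
  assumes x: "cmod x \<le> 1"
  defines "Cb \<equiv> pgf (\<lambda>n. service_start_mass (n + b)) x"
  shows "(x ^ b - Kf lam g s b x) * Cb
    = (\<Sum>r=a..<b. (complex_of_real (departure_total r) + complex_of_real (vacation_end_mass r)
          + complex_of_real (dormant_arrival_mass r)) * Kf lam g s r x)
      + (\<Sum>n<a. (complex_of_real (departure_total n) + of_nat \<delta> * complex_of_real (vacation_end_mass n)) * x ^ n)
        * Hf lam g v x
      + (\<Sum>i<a. complex_of_real (dormant_mass i) * (complex_of_real (g (b - i)) * x ^ b + overshoot_pgf g b i x))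
      - (\<Sum>n<b. (complex_of_real (departure_total n) + complex_of_real (vacation_end_mass n)) * x ^ n)"
proof -
  have abs: "summable (\<lambda>n. \<bar>departure_mass n r\<bar>)" if "r \<in> {a..b}" for r
    using summable_departure_mass[OF that] departure_mass_nonneg[OF that] by simp
  have "summable (\<lambda>n. \<bar>departure_total n\<bar>)" "summable (\<lambda>n. \<bar>vacation_end_mass n\<bar>)"
    "summable (\<lambda>n. \<bar>dormant_arrival_mass n\<bar>)" "summable (\<lambda>n. \<bar>service_start_mass n\<bar>)"
    using summable_departure_total departure_total_nonneg summable_vacation_end_mass vacation_end_mass_nonneg
      summable_dormant_arrival_mass dormant_arrival_mass_nonneg summable_service_start_mass
      service_start_mass_nonneg by simp_all
  note abs' = this
  have abs_sum: "summable (\<lambda>n. \<bar>departure_total n + vacation_end_mass n\<bar>)"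
    using departure_total_nonneg vacation_end_mass_nonneg abs'(1,2) by (simp add: summable_add)
  have "pgf departure_total x = (\<Sum>r=a..b. pgf (\<lambda>n. departure_mass n r) x)"
    unfolding departure_total_def[abs_def] by (rule pgf_sum[OF finite_atLeastAtMost abs x])
  also have "\<dots> = (\<Sum>r=a..<b. service_start_mass r * Kf lam g s r x) + Cb * Kf lam g s b x"
  proof -
    have "{a..b} = insert b {a..<b}" using ab by auto
    then show ?thesis
      by (simp add: pgf_departure_mass_below_b pgf_departure_mass_b x Cb_def)
  qed
  finally have "pgf service_start_mass x = (\<Sum>r=a..<b. service_start_mass r * Kf lam g s r x) + Cb * Kf lam g s b x
      + (\<Sum>n<a. complex_of_real (departure_total n + real \<delta> * vacation_end_mass n) * x ^ n) * Hf lam g v x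
      + pgf dormant_arrival_mass x"
    unfolding service_start_mass_def[abs_def] pgf_add[OF abs_sum abs'(3) x]
      pgf_add[OF abs'(1,2) x] pgf_vacation_end_mass[OF x] by simp
  moreover have "x ^ b * Cb = pgf service_start_mass x - (\<Sum>n<b. complex_of_real (service_start_mass n) * x ^ n)"
    unfolding Cb_def by (rule pgf_shift[OF abs'(4) x])
  ultimately show ?thesis
    using dormant_arrival_tail[OF x]
    by (simp add: service_start_mass_def sum.distrib algebra_simps)
qed

lemma departure_series_sums:
  assumes x: "cmod x \<le> 1"
  shows "(\<lambda>n. \<Sum>r=a..b. complex_of_real (departure_mass n r) * x ^ n * y ^ r)
    sums ((\<Sum>r=a..<b. y ^ r * (complex_of_real (departure_total r) + complex_of_real (vacation_end_mass r)
            + complex_of_real (dormant_arrival_mass r)) * Kf lam g s r x)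
          + y ^ b * pgf (\<lambda>n. service_start_mass (n + b)) x * Kf lam g s b x)"
proof -
  have "(\<lambda>n. \<Sum>r=a..b. complex_of_real (departure_mass n r) * x ^ n * y ^ r)
      sums (\<Sum>r=a..b. y ^ r * pgf (\<lambda>n. departure_mass n r) x)"
  proof (rule sums_sum)
    fix r assume r: "r \<in> {a..b}"
    have "summable (\<lambda>n. \<bar>departure_mass n r\<bar>)"
      using summable_departure_mass[OF r] departure_mass_nonneg[OF r] by simp
    from sums_mult[OF pgf_sums[OF this x], of "y ^ r"]
    show "(\<lambda>n. complex_of_real (departure_mass n r) * x ^ n * y ^ r)
        sums (y ^ r * pgf (\<lambda>n. departure_mass n r) x)"
      by (simp add: mult_ac)
  qed
  moreover have "{a..b} = insert b {a..<b}" using ab by auto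
  ultimately show ?thesis
    by (simp add: pgf_departure_mass_below_b pgf_departure_mass_b x service_start_mass_def mult_ac add_ac)
qed

theorem departure_pgf_sums:
  assumes x: "cmod x \<le> 1" and denom: "x ^ b \<noteq> Kf lam g s b x"
  shows "(\<lambda>n. \<Sum>r=a..b. complex_of_real (pplus lam g a b p Q n r) * x ^ n * y ^ r) sums
    (bulk_numerator a b (of_nat \<delta>) (\<lambda>i. complex_of_real (g i)) (\<lambda>j n. complex_of_real (ecoef g j n))
       (\<lambda>j. overshoot_pgf g b j x) (\<lambda>i. Kf lam g s i x) (Hf lam g v x) x y
       (\<lambda>n. complex_of_real (pplusn lam g a b p Q n)) (\<lambda>n. complex_of_real (Qplus lam g a b p Q n))
     / (x ^ b - Kf lam g s b x))"
proof -
  define c where "c = complex_of_real (1 / tau a b p Q)"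
  define S where "S = (\<Sum>r=a..<b. y ^ r * (complex_of_real (departure_total r) + complex_of_real (vacation_end_mass r)
          + complex_of_real (dormant_arrival_mass r)) * Kf lam g s r x)
        + y ^ b * pgf (\<lambda>n. service_start_mass (n + b)) x * Kf lam g s b x"
  define N where "N = bulk_numerator a b (of_nat \<delta>) (\<lambda>i. complex_of_real (g i)) (\<lambda>j n. complex_of_real (ecoef g j n))
       (\<lambda>j. overshoot_pgf g b j x) (\<lambda>i. Kf lam g s i x) (Hf lam g v x) x y
       (\<lambda>n. complex_of_real (departure_total n)) (\<lambda>n. complex_of_real (vacation_end_mass n))"
  have "(x ^ b - Kf lam g s b x) * S = N"
    unfolding S_def N_def
    by (rule bulk_numerator_identity[OF ab service_start_balance[OF x]])
      (simp_all add: dormant_arrival_mass_def dormant_mass_renewal)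
  then have "S = N / (x ^ b - Kf lam g s b x)"
    using denom by (simp add: eq_divide_eq mult.commute)
  then have "(\<lambda>n. c * (\<Sum>r=a..b. complex_of_real (departure_mass n r) * x ^ n * y ^ r)) sums
      (c * N / (x ^ b - Kf lam g s b x))"
    using sums_mult[OF departure_series_sums[OF x, where y = y], of c] unfolding S_def[symmetric] by simp
  moreover have "(\<lambda>n. complex_of_real (pplusn lam g a b p Q n)) = (\<lambda>n. c * complex_of_real (departure_total n))"
    "(\<lambda>n. complex_of_real (Qplus lam g a b p Q n)) = (\<lambda>n. c * complex_of_real (vacation_end_mass n))"
    by (simp_all add: pplusn_eq Qplus_eq c_def divide_inverse mult_ac)
  moreover have "(\<lambda>n. \<Sum>r=a..b. complex_of_real (pplus lam g a b p Q n r) * x ^ n * y ^ r)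
      = (\<lambda>n. c * (\<Sum>r=a..b. complex_of_real (departure_mass n r) * x ^ n * y ^ r))"
    by (simp add: pplus_eq c_def divide_inverse sum_distrib_left mult_ac)
  ultimately show ?thesis
    unfolding N_def by (simp only: bulk_numerator_scale)
qed

end

text \<open>Stationarity is assumed outright.\<close>

theorem mainTheorem3:
  fixes a b \<delta> :: nat and lam :: real
    and g :: "nat \<Rightarrow> real" and s :: "nat \<Rightarrow> nat \<Rightarrow> real" and v :: "nat \<Rightarrow> real"
    and p0 :: "nat \<Rightarrow> real" and p :: "nat \<Rightarrow> nat \<Rightarrow> nat \<Rightarrow> real" and Q :: "nat \<Rightarrow> nat \<Rightarrow> real"
    and x y :: complex
  assumes ab: "1 \<le> a" "a \<le> b"
    and lam: "0 < lam" "lam < 1"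
    and g: "\<forall>m. 0 \<le> g m" "g 0 = 0" "g sums 1" "summable (\<lambda>m. real m * g m)"
    and s: "\<forall>r\<in>{a..b}. (\<forall>n. 0 \<le> s r n) \<and> s r 0 = 0 \<and> s r sums 1 \<and> summable (\<lambda>n. real n * s r n)"
    and v: "\<forall>n. 0 \<le> v n" "v 0 = 0" "v sums 1" "summable (\<lambda>n. real n * v n)"
    and delta: "\<delta> = 0 \<or> \<delta> = 1"
    and rho: "lam * (\<Sum>m. real m * g m) * (\<Sum>n. real n * s b n) / real b < 1"
    and nonneg: "\<forall>n<a. 0 \<le> p0 n"
      "\<forall>n. \<forall>r\<in>{a..b}. \<forall>u\<ge>1. 0 \<le> p n r u"
      "\<forall>n. \<forall>u\<ge>1. 0 \<le> Q n u"
    and E1: "p0 0 = (1 - real \<delta>) * ((1 - lam) * p0 0 + (1 - lam) * Q 0 1)"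
    and E2: "\<forall>n\<in>{1..a-1}. p0 n = (1 - real \<delta>) * ((1 - lam) * p0 n + lam * (\<Sum>i=1..n. g i * p0 (n - i))
               + (1 - lam) * Q n 1 + lam * (\<Sum>i=1..n. g i * Q (n - i) 1))"
    and E3: "\<forall>r\<in>{a..b}. \<forall>u\<ge>1. p 0 r u = (1 - lam) * p 0 r (u + 1)
               + s r u * ((\<Sum>m=a..b. (1 - lam) * p r m 1 + lam * (\<Sum>i=1..r. g i * p (r - i) m 1))
                 + (1 - lam) * Q r 1 + lam * (\<Sum>i=1..r. g i * Q (r - i) 1)
                 + (1 - real \<delta>) * lam * (\<Sum>i=0..a-1. g (r - i) * p0 i))"
    and E4: "\<forall>n\<ge>1. \<forall>r\<in>{a..b-1}. \<forall>u\<ge>1. p n r u = (1 - lam) * p n r (u + 1)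
               + lam * (\<Sum>i=1..n. g i * p (n - i) r (u + 1))"
    and E5: "\<forall>n\<ge>1. \<forall>u\<ge>1. p n b u = (1 - lam) * p n b (u + 1)
               + lam * (\<Sum>i=1..n. g i * p (n - i) b (u + 1))
               + s b u * ((\<Sum>m=a..b. (1 - lam) * p (n + b) m 1 + lam * (\<Sum>i=1..n+b. g i * p (n + b - i) m 1))
                 + (1 - lam) * Q (n + b) 1 + lam * (\<Sum>i=1..n+b. g i * Q (n + b - i) 1)
                 + (1 - real \<delta>) * lam * (\<Sum>i=0..a-1. g (n + b - i) * p0 i))"
    and E6: "\<forall>u\<ge>1. Q 0 u = (1 - lam) * Q 0 (u + 1)
               + (1 - lam) * ((\<Sum>m=a..b. p 0 m 1) + real \<delta> * Q 0 1) * v u"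
    and E7: "\<forall>n\<in>{1..a-1}. \<forall>u\<ge>1. Q n u = (1 - lam) * Q n (u + 1)
               + lam * (\<Sum>i=1..n. g i * Q (n - i) (u + 1))
               + v u * ((1 - lam) * ((\<Sum>m=a..b. p n m 1) + real \<delta> * Q n 1)
                 + lam * (\<Sum>i=1..n. g i * ((\<Sum>m=a..b. p (n - i) m 1) + real \<delta> * Q (n - i) 1)))"
    and E8: "\<forall>n\<ge>a. \<forall>u\<ge>1. Q n u = (1 - lam) * Q n (u + 1) + lam * (\<Sum>i=1..n. g i * Q (n - i) (u + 1))"
    and N: "(\<lambda>(n, r, u). p n r u) summable_on (UNIV \<times> {a..b} \<times> {1..})"
      "(\<lambda>(n, u). Q n u) summable_on (UNIV \<times> {1..})"
      "(1 - real \<delta>) * (\<Sum>n<a. p0 n)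
         + infsum (\<lambda>(n, r, u). p n r u) (UNIV \<times> {a..b} \<times> {1..})
         + infsum (\<lambda>(n, u). Q n u) (UNIV \<times> {1..}) = 1"
    and xy: "cmod x \<le> 1" "cmod y \<le> 1" "x ^ b \<noteq> Kf lam g s b x"
  shows "(\<lambda>n. \<Sum>r=a..b. complex_of_real (pplus lam g a b p Q n r) * x ^ n * y ^ r) sums
    (( (\<Sum>n<a. complex_of_real (pplusn lam g a b p Q n) * x ^ n) * (Hf lam g v x - 1) * y ^ b * Kf lam g s b x
     + (\<Sum>n<a. complex_of_real (Qplus lam g a b p Q n) *
         (x ^ n * (of_nat \<delta> * Hf lam g v x - 1) * y ^ b * Kf lam g s b x
          + (1 - of_nat \<delta>) * (\<Sum>j=n..a-1. complex_of_real (ecoef g j n) *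
              ((\<Sum>i=a..b. complex_of_real (g (i - j)) * Kf lam g s i x
                   * ((x ^ b - Kf lam g s b x) * y ^ i + y ^ b * Kf lam g s b x))
               + (\<Sum>k. complex_of_real (g (k + (b + 1 - j))) * x ^ (k + (b + 1 - j) + j))
                   * y ^ b * Kf lam g s b x))))
     + (\<Sum>n=a..b-1. (complex_of_real (pplusn lam g a b p Q n) + complex_of_real (Qplus lam g a b p Q n)) *
         (Kf lam g s b x * Kf lam g s n x * (y ^ b - y ^ n) + Kf lam g s n x * x ^ b * y ^ n
          - Kf lam g s b x * x ^ n * y ^ b)))
     / (x ^ b - Kf lam g s b x))"
proof -
  interpret bulk_vacation_queue a b \<delta> lam g s v p0 p Q
  proof (unfold_locales; (rule ab E1 E2[rule_format] E3[rule_format] E4[rule_format] E5[rule_format]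
        E6[rule_format] E7[rule_format] E8[rule_format] N(1,2))?)
  qed (use lam g s v delta nonneg in \<open>auto dest: sums_summable\<close>)
  show ?thesis
    using departure_pgf_sums[OF xy(1,3)] unfolding bulk_numerator_def overshoot_pgf_def .
qed

end
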